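(* Assume the setting and Assumption (A) in the context, and let $f:\mathcal{X}\to\mathbb{R}^{n_{\text{out}}}$ satisfy $A(x)f(x)\le b(x)$ and $C(x)f(x)=d(x)$ for all $x\in\mathcal{X}$. Write $f(x)=\begin{bmatrix} f_1(x)\\ f_2(x)\end{bmatrix}$ with $f_1(x)\in\mathbb{R}^{n_{\text{eq}}}$, $f_2(x)\in\mathbb{R}^{n_{\text{out}}-n_{\text{eq}}}$. Then for every $f_\theta:\mathcal{X}\to\mathbb{R}^{n_{\text{out}}-n_{\text{eq}}}$ and every $x\in\mathcal{X}$, $$\|f(x)-\mathcal{P}(f_\theta)(x)\|_2\le \big(1+\|\tilde A(x)^+\|_2\,\|\tilde A(x)\|_2\big)\sqrt{1+\|C_1(x)^{-1}C_2(x)\|_2^2}\;\|f_2(x)-f_\theta(x)\|_2,$$ where for matrices $\|\cdot\|_2$ denotes the operator norm induced by the Euclidean norm.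
   Context: Setting: $\mathcal{X}\subset\mathbb{R}^{n_{\text{in}}}$; integers $n_{\text{ineq}}\ge 0$, $0\le n_{\text{eq}}\le n_{\text{out}}$; maps $A:\mathcal{X}\to\mathbb{R}^{n_{\text{ineq}}\times n_{\text{out}}}$, $b:\mathcal{X}\to\mathbb{R}^{n_{\text{ineq}}}$, $C:\mathcal{X}\to\mathbb{R}^{n_{\text{eq}}\times n_{\text{out}}}$, $d:\mathcal{X}\to\mathbb{R}^{n_{\text{eq}}}$, describing the constraints $A(x)y\le b(x)$, $C(x)y=d(x)$ on $y\in\mathbb{R}^{n_{\text{out}}}$. Write $A(x)=[A_1(x)\;A_2(x)]$ and $C(x)=[C_1(x)\;C_2(x)]$, where $A_1,C_1$ consist of the first $n_{\text{eq}}$ columns and $A_2,C_2$ of the last $n_{\text{out}}-n_{\text{eq}}$ columns. (If $n_{\text{eq}}=0$, the equality constraints, $C_1$, $C_2$, $d$ and the first block below are absent.) Assumption (A): (i) for every $x\in\mathcal{X}$ there exists $y\in\mathbb{R}^{n_{\text{out}}}$ with $A(x)y\le b(x)$ and $C(x)y=d(x)$; (ii) $C_1(x)$ is invertible for all $x\in\mathcal{X}$; (iii) $\tilde A(x):=A_2(x)-A_1(x)C_1(x)^{-1}C_2(x)\in\mathbb{R}^{n_{\text{ineq}}\times(n_{\text{out}}-n_{\text{eq}})}$ has full row rank for all $x\in\mathcal{X}$. Define $\tilde b(x):=b(x)-A_1(x)C_1(x)^{-1}d(x)$. For a full-row-rank matrix $M$, $M^+:=M^\top(MM^\top)^{-1}$.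 $\mathsf{ReLU}(v)$ is the componentwise $\max(v,0)$. HardNet-Aff: for $f_\theta:\mathcal{X}\to\mathbb{R}^{n_{\text{out}}-n_{\text{eq}}}$, define $f_\theta^*(x):=f_\theta(x)-\tilde A(x)^+\,\mathsf{ReLU}\big(\tilde A(x)f_\theta(x)-\tilde b(x)\big)$ and $$\mathcal{P}(f_\theta)(x):=\begin{bmatrix} C_1(x)^{-1}\big(d(x)-C_2(x)f_\theta^*(x)\big)\\ f_\theta^*(x)\end{bmatrix}\in\mathbb{R}^{n_{\text{out}}}.$$ *)

theory Defs
  imports "Jordan_Normal_Form.Matrix" "Jordan_Normal_Form.DL_Rank"
begin

(* Matrices/vectors are JNF 'real mat' / 'real vec' with explicit dimensions,
   so that the degenerate cases n_eq = 0 and n_ineq = 0 are covered. *)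

definition vec_le :: "real vec \<Rightarrow> real vec \<Rightarrow> bool" where
  "vec_le u v \<longleftrightarrow> dim_vec u = dim_vec v \<and> (\<forall>i < dim_vec v. u $ i \<le> v $ i)"

definition first_cols :: "nat \<Rightarrow> real mat \<Rightarrow> real mat" where
  "first_cols k M = mat (dim_row M) k (\<lambda>(i, j). M $$ (i, j))"

definition last_cols :: "nat \<Rightarrow> real mat \<Rightarrow> real mat" where
  "last_cols k M = mat (dim_row M) (dim_col M - k) (\<lambda>(i, j). M $$ (i, j + k))"

definition first_entries :: "nat \<Rightarrow> real vec \<Rightarrow> real vec" where
  "first_entries k v = vec k (\<lambda>i. v $ i)"

definition last_entries :: "nat \<Rightarrow> real vec \<Rightarrow> real vec" where
  "last_entries k v = vec (dim_vec v - k) (\<lambda>i. v $ (i + k))"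

definition mat_inv :: "real mat \<Rightarrow> real mat" where
  "mat_inv M = (SOME B. B \<in> carrier_mat (dim_row M) (dim_row M) \<and>
                        M * B = 1\<^sub>m (dim_row M) \<and> B * M = 1\<^sub>m (dim_row M))"

definition pinv :: "real mat \<Rightarrow> real mat" where
  "pinv M = transpose_mat M * mat_inv (M * transpose_mat M)"

definition full_row_rank :: "real mat \<Rightarrow> bool" where
  "full_row_rank M \<longleftrightarrow> vec_space.rank (dim_row M) M = dim_row M"

definition relu :: "real vec \<Rightarrow> real vec" where
  "relu v = map_vec (\<lambda>t. max t 0) v"

definition vnorm :: "real vec \<Rightarrow> real" where
  "vnorm v = sqrt (v \<bullet> v)"

definition opnorm :: "real mat \<Rightarrow> real" where
  "opnorm M = Sup {vnorm (M *\<^sub>v v) | v. v \<in> carrier_vec (dim_col M) \<and> vnorm v \<le> 1}"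

definition A_tilde :: "nat \<Rightarrow> real mat \<Rightarrow> real mat \<Rightarrow> real mat" where
  "A_tilde neq A C = last_cols neq A - first_cols neq A * mat_inv (first_cols neq C) * last_cols neq C"

definition b_tilde :: "nat \<Rightarrow> real mat \<Rightarrow> real vec \<Rightarrow> real mat \<Rightarrow> real vec \<Rightarrow> real vec" where
  "b_tilde neq A b C d = b - first_cols neq A *\<^sub>v (mat_inv (first_cols neq C) *\<^sub>v d)"

definition hardnet_fstar ::
  "nat \<Rightarrow> real mat \<Rightarrow> real vec \<Rightarrow> real mat \<Rightarrow> real vec \<Rightarrow> real vec \<Rightarrow> real vec" where
  "hardnet_fstar neq A b C d y =
     y - pinv (A_tilde neq A C) *\<^sub>v relu (A_tilde neq A C *\<^sub>v y - b_tilde neq A b C d)"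

(* HardNet-Aff output P(f_theta)(x), given y = f_theta(x) and the data at x *)
definition hardnet_aff ::
  "nat \<Rightarrow> real mat \<Rightarrow> real vec \<Rightarrow> real mat \<Rightarrow> real vec \<Rightarrow> real vec \<Rightarrow> real vec" where
  "hardnet_aff neq A b C d y =
     (let fs = hardnet_fstar neq A b C d y
      in (mat_inv (first_cols neq C) *\<^sub>v (d - last_cols neq C *\<^sub>v fs)) @\<^sub>v fs)"

end

theory Submission
  imports Defs "HOL-Analysis.L2_Norm"
begin

text \<open>
  Eliminating the equality constraints writes every feasible point as
  \<open>[C\<^sub>1\<^sup>-\<^sup>1 (d - C\<^sub>2 z); z]\<close>, where \<open>z\<close> satisfies the reduced inequalities
  \<open>\<tilde>A z \<le> \<tilde>b\<close>. For such a \<open>z\<close> the violation \<open>ReLU(\<tilde>A y - \<tilde>b)\<close> is bounded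
  componentwise by \<open>|\<tilde>A (y - z)|\<close>, so the correction step moves \<open>y\<close> by at most
  \<open>\<parallel>\<tilde>A\<^sup>+\<parallel> \<parallel>\<tilde>A\<parallel> \<parallel>y - z\<parallel>\<close>; this gives the factor \<open>1 + \<parallel>\<tilde>A\<^sup>+\<parallel> \<parallel>\<tilde>A\<parallel>\<close>.
  Completing both vectors by the equality constraints changes the first block of
  their difference by \<open>C\<^sub>1\<^sup>-\<^sup>1 C\<^sub>2\<close> applied to the second block, which contributes
  the factor \<open>\<surd>(1 + \<parallel>C\<^sub>1\<^sup>-\<^sup>1 C\<^sub>2\<parallel>\<^sup>2)\<close> by Pythagoras.
  The pseudo-inverse enters only through its operator norm, so none of its
  algebraic properties are needed.
\<close>

section \<open>The Euclidean norm\<close>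

lemma vnorm_L2: "vnorm v = L2_set (\<lambda>i. v $ i) {0..<dim_vec v}"
  unfolding vnorm_def L2_set_def scalar_prod_def by (simp add: power2_eq_square)

lemma vnorm_nonneg: "0 \<le> vnorm v"
  by (simp add: vnorm_L2)

lemma vnorm_power2: "(vnorm v)\<^sup>2 = v \<bullet> v"
  unfolding vnorm_def by (simp add: scalar_prod_def sum_nonneg)

lemma vnorm_eq_0_imp_zero: "vnorm v = 0 \<Longrightarrow> v = 0\<^sub>v (dim_vec v)"
  unfolding vnorm_L2 by (auto simp: L2_set_eq_0_iff)

lemma vnorm_add_le:
  assumes "dim_vec u = dim_vec v"
  shows "vnorm (u + v) \<le> vnorm u + vnorm v"
proof -
  have "vnorm (u + v) = L2_set (\<lambda>i. u $ i + v $ i) {0..<dim_vec v}"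
    unfolding vnorm_L2 by (intro L2_set_cong) auto
  also have "\<dots> \<le> L2_set (\<lambda>i. u $ i) {0..<dim_vec v} + L2_set (\<lambda>i. v $ i) {0..<dim_vec v}"
    by (rule L2_set_triangle_ineq)
  finally show ?thesis using assms by (simp add: vnorm_L2)
qed

lemma vnorm_minus_commute:
  assumes "dim_vec u = dim_vec v"
  shows "vnorm (u - v) = vnorm (v - u)"
  unfolding vnorm_L2 using assms by (simp add: L2_set_def power2_commute)

lemma vnorm_smult: "vnorm (c \<cdot>\<^sub>v v) = \<bar>c\<bar> * vnorm v"
proof -
  have "vnorm (c \<cdot>\<^sub>v v) = L2_set (\<lambda>i. \<bar>c\<bar> * \<bar>v $ i\<bar>) {0..<dim_vec v}"
    unfolding vnorm_L2 L2_set_def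
    by (intro arg_cong[where f = sqrt] sum.cong) (auto simp: power_mult_distrib)
  also have "\<dots> = \<bar>c\<bar> * L2_set (\<lambda>i. \<bar>v $ i\<bar>) {0..<dim_vec v}"
    by (rule L2_set_right_distrib[symmetric]) simp
  finally show ?thesis unfolding vnorm_L2 L2_set_def by simp
qed

lemma vnorm_append_power2: "(vnorm (u @\<^sub>v v))\<^sup>2 = (vnorm u)\<^sup>2 + (vnorm v)\<^sup>2"
  unfolding vnorm_power2
  by (rule scalar_prod_append[OF carrier_vecI carrier_vecI carrier_vecI carrier_vecI]) (rule refl)+

lemma abs_vec_index_le_vnorm:
  assumes "i < dim_vec v"
  shows "\<bar>v $ i\<bar> \<le> vnorm v"
proof -
  have "vnorm v = L2_set (\<lambda>i. \<bar>v $ i\<bar>) {0..<dim_vec v}"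
    by (simp add: vnorm_L2 L2_set_def)
  then show ?thesis using member_le_L2_set[of "{0..<dim_vec v}" i] assms by simp
qed

section \<open>The operator norm\<close>

lemma vnorm_mult_mat_vec_le_entry_sum:
  fixes M :: "real mat"
  assumes M: "M \<in> carrier_mat r c" and v: "v \<in> carrier_vec c"
  shows "vnorm (M *\<^sub>v v) \<le> (\<Sum>i<r. \<Sum>j<c. \<bar>M $$ (i, j)\<bar>) * vnorm v"
proof -
  have row: "\<bar>(M *\<^sub>v v) $ i\<bar> \<le> (\<Sum>j<c. \<bar>M $$ (i, j)\<bar>) * vnorm v" if i: "i < r" for i
  proof -
    have "\<bar>(M *\<^sub>v v) $ i\<bar> = \<bar>\<Sum>j<c. M $$ (i, j) * v $ j\<bar>"
      using M v i by (simp add: scalar_prod_def lessThan_atLeast0)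
    also have "\<dots> \<le> (\<Sum>j<c. \<bar>M $$ (i, j)\<bar> * \<bar>v $ j\<bar>)"
      by (rule order.trans[OF sum_abs]) (simp add: abs_mult)
    also have "\<dots> \<le> (\<Sum>j<c. \<bar>M $$ (i, j)\<bar> * vnorm v)"
      using v by (intro sum_mono mult_left_mono abs_vec_index_le_vnorm) auto
    finally show ?thesis by (simp add: sum_distrib_right)
  qed
  have "vnorm (M *\<^sub>v v) \<le> (\<Sum>i<r. \<bar>(M *\<^sub>v v) $ i\<bar>)"
    using M L2_set_le_sum_abs[of "\<lambda>i. (M *\<^sub>v v) $ i" "{0..<r}"]
    by (simp add: vnorm_L2 lessThan_atLeast0)
  also have "\<dots> \<le> (\<Sum>i<r. (\<Sum>j<c. \<bar>M $$ (i, j)\<bar>) * vnorm v)"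
    by (intro sum_mono row) simp
  finally show ?thesis by (simp add: sum_distrib_right)
qed

lemma vnorm_mult_mat_vec_le_opnorm_unit:
  fixes M :: "real mat"
  assumes M: "M \<in> carrier_mat r c" and u: "u \<in> carrier_vec c" and u1: "vnorm u \<le> 1"
  shows "vnorm (M *\<^sub>v u) \<le> opnorm M"
proof -
  define B where "B = (\<Sum>i<r. \<Sum>j<c. \<bar>M $$ (i, j)\<bar>)"
  have "B \<ge> 0" unfolding B_def by (intro sum_nonneg) simp
  then have bdd: "bdd_above {vnorm (M *\<^sub>v v) | v. v \<in> carrier_vec (dim_col M) \<and> vnorm v \<le> 1}"
    using M vnorm_mult_mat_vec_le_entry_sum[OF M]
    by (intro bdd_aboveI[where M = B]) (force simp: B_def intro: order.trans mult_left_le)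
  show ?thesis
    unfolding opnorm_def by (rule cSup_upper[OF _ bdd]) (use M u u1 in auto)
qed

lemma opnorm_nonneg:
  fixes M :: "real mat"
  assumes "M \<in> carrier_mat r c"
  shows "0 \<le> opnorm M"
proof -
  have "vnorm (M *\<^sub>v 0\<^sub>v c) \<le> opnorm M"
    using assms by (intro vnorm_mult_mat_vec_le_opnorm_unit) (auto simp: vnorm_def)
  then show ?thesis using vnorm_nonneg order_trans by blast
qed

lemma vnorm_mult_mat_vec_le:
  fixes M :: "real mat"
  assumes M: "M \<in> carrier_mat r c" and v: "v \<in> carrier_vec c"
  shows "vnorm (M *\<^sub>v v) \<le> opnorm M * vnorm v"
proof (cases "vnorm v = 0")
  case True
  then have "M *\<^sub>v v = 0\<^sub>v r"
    using vnorm_eq_0_imp_zero[OF True] M v by (intro eq_vecI) auto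
  then show ?thesis using True by (simp add: vnorm_def)
next
  case False
  then have pos: "vnorm v > 0" using vnorm_nonneg[of v] by simp
  define u where "u = (1 / vnorm v) \<cdot>\<^sub>v v"
  have "M *\<^sub>v u = (1 / vnorm v) \<cdot>\<^sub>v (M *\<^sub>v v)"
    unfolding u_def by (rule mult_mat_vec[OF M v])
  moreover have "vnorm (M *\<^sub>v u) \<le> opnorm M"
    using v pos by (intro vnorm_mult_mat_vec_le_opnorm_unit[OF M]) (auto simp: u_def vnorm_smult)
  ultimately show ?thesis using pos by (simp add: vnorm_smult divide_le_eq mult.commute)
qed

section \<open>Inverses\<close>

lemma mat_inv_carrier_and_inverse:
  fixes M :: "real mat"
  assumes M: "M \<in> carrier_mat n n"
    and inverse: "B \<in> carrier_mat n n" "M * B = 1\<^sub>m n" "B * M = 1\<^sub>m n"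
  shows "mat_inv M \<in> carrier_mat n n \<and> M * mat_inv M = 1\<^sub>m n \<and> mat_inv M * M = 1\<^sub>m n"
proof -
  have "dim_row M = n" using M by simp
  moreover have "\<exists>B. B \<in> carrier_mat n n \<and> M * B = 1\<^sub>m n \<and> B * M = 1\<^sub>m n"
    using inverse by blast
  ultimately show ?thesis unfolding mat_inv_def by (simp only:) (rule someI_ex)
qed

lemma invertible_mat_mat_inv:
  fixes M :: "real mat"
  assumes M: "M \<in> carrier_mat n n" and "invertible_mat M"
  shows "mat_inv M \<in> carrier_mat n n \<and> M * mat_inv M = 1\<^sub>m n \<and> mat_inv M * M = 1\<^sub>m n"
proof -
  obtain B where MB: "M * B = 1\<^sub>m (dim_row M)" and BM: "B * M = 1\<^sub>m (dim_row B)"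
    using assms(2) unfolding invertible_mat_def inverts_mat_def by blast
  have "B \<in> carrier_mat n n"
    using arg_cong[OF MB, of dim_col] arg_cong[OF BM, of dim_col] M by auto
  then show ?thesis using M MB BM by (intro mat_inv_carrier_and_inverse) auto
qed

lemma det_nonzero_mat_inv:
  fixes M :: "real mat"
  assumes M: "M \<in> carrier_mat n n" and "det M \<noteq> 0"
  shows "mat_inv M \<in> carrier_mat n n \<and> M * mat_inv M = 1\<^sub>m n \<and> mat_inv M * M = 1\<^sub>m n"
proof -
  have "M \<in> Units (ring_mat TYPE(real) n ())" by (rule det_non_zero_imp_unit[OF assms])
  then obtain B where B: "B * M = 1\<^sub>m n" "B \<in> carrier_mat n n"
    unfolding Units_def ring_mat_def by auto
  then show ?thesis
    using mat_mult_left_right_inverse[OF B(2) M B(1)] by (intro mat_inv_carrier_and_inverse[OF M B(2)])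
qed

lemma (in vec_space) full_rank_span_cols:
  assumes M: "M \<in> carrier_mat n k" and "rank M = n"
  shows "span (set (cols M)) = carrier_vec n"
proof -
  define P where "P = (\<lambda>T. T \<subseteq> set (cols M) \<and> lin_indpt T)"
  have S: "set (cols M) \<subseteq> carrier_vec n" using M cols_dim by blast
  have "P {}" unfolding P_def by (simp add: lin_dep_def)
  then obtain U where U: "maximal U P"
    using maximal_exists_superset[of "set (cols M)" P "{}"] unfolding P_def by auto
  have US: "U \<subseteq> set (cols M)" "lin_indpt U" using U unfolding maximal_def P_def by blast+
  have "finite U" using US(1) finite_subset by blast
  moreover have "card U = n" using rank_card_indpt[OF M U[unfolded P_def]] assms(2) by simp
  moreover have "U \<subseteq> carrier V" using US(1) S by simp
  ultimately have "basis U"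
    using dim_li_is_basis[OF fin_dim _ _ US(2)] dim_is_n by simp
  then have "carrier_vec n \<subseteq> span (set (cols M))"
    unfolding basis_def using span_is_monotone[OF US(1)] by auto
  then show ?thesis using span_closed[OF S] by blast
qed

text \<open>Full row rank makes \<open>M\<^sup>T\<close> injective: a vector killed by \<open>M\<^sup>T\<close> is orthogonal to
  the columns of \<open>M\<close>, which span everything, hence to itself.\<close>

lemma full_row_rank_transpose_kernel:
  fixes M :: "real mat"
  assumes M: "M \<in> carrier_mat m k" and "full_row_rank M"
    and v: "v \<in> carrier_vec m" and "transpose_mat M *\<^sub>v v = 0\<^sub>v k"
  shows "v = 0\<^sub>v m"
proof -
  have S: "set (cols M) \<subseteq> carrier_vec m" using M cols_dim by blast
  have orth: "\<forall>w \<in> set (cols M). v \<bullet> w = 0"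
  proof
    fix w assume "w \<in> set (cols M)"
    then obtain j where j: "j < k" "w = col M j" using M by (auto simp: cols_def)
    have "(transpose_mat M *\<^sub>v v) $ j = 0" using assms(4) j by simp
    then have "col M j \<bullet> v = 0" using j M by simp
    then show "v \<bullet> w = 0" using j M v comm_scalar_prod[of v m w] by simp
  qed
  have "vec_space.rank m M = m" using assms(2) M by (simp add: full_row_rank_def)
  note span_cols = vec_space.full_rank_span_cols[OF M this]
  have "v \<in> vec_module.orthogonal_complement m (carrier_vec m)"
    using vec_space.in_orthogonal_complement_span[OF S] v orth
    unfolding span_cols vec_module.orthogonal_complement_def by blast
  then have "vnorm v = 0" using v unfolding vec_module.orthogonal_complement_def vnorm_def by simp
  then show ?thesis using vnorm_eq_0_imp_zero v by (metis carrier_vecD)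
qed

lemma full_row_rank_gram_det:
  fixes M :: "real mat"
  assumes M: "M \<in> carrier_mat m k" and rank: "full_row_rank M"
  shows "det (M * transpose_mat M) \<noteq> 0"
proof
  assume "det (M * transpose_mat M) = 0"
  then obtain v where v: "v \<in> carrier_vec m" "v \<noteq> 0\<^sub>v m" "(M * transpose_mat M) *\<^sub>v v = 0\<^sub>v m"
    using det_0_iff_vec_prod_zero_field[of "M * transpose_mat M" m] M by auto
  define w where "w = transpose_mat M *\<^sub>v v"
  have w: "w \<in> carrier_vec k" using M v unfolding w_def by simp
  have "vnorm w ^ 2 = v \<bullet> (M *\<^sub>v w)"
    unfolding vnorm_power2 w_def by (rule transpose_vec_mult_scalar[OF M _ v(1)]) (use w w_def in simp)
  also have "\<dots> = 0" using v M unfolding w_def by simp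
  finally have "w = 0\<^sub>v k" using vnorm_eq_0_imp_zero w by (metis carrier_vecD zero_eq_power2)
  then show False using full_row_rank_transpose_kernel[OF M rank v(1)] v(2) unfolding w_def by simp
qed

lemma pinv_carrier:
  fixes M :: "real mat"
  assumes "M \<in> carrier_mat m k" and "full_row_rank M"
  shows "pinv M \<in> carrier_mat k m"
  using det_nonzero_mat_inv[OF _ full_row_rank_gram_det[OF assms], of m] assms(1)
  unfolding pinv_def by auto

section \<open>Block decomposition\<close>

lemma first_cols_carrier: "M \<in> carrier_mat r n \<Longrightarrow> first_cols k M \<in> carrier_mat r k"
  unfolding first_cols_def by simp

lemma last_cols_carrier: "M \<in> carrier_mat r n \<Longrightarrow> last_cols k M \<in> carrier_mat r (n - k)"
  unfolding last_cols_def by simp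

lemma first_entries_carrier: "first_entries k v \<in> carrier_vec k"
  unfolding first_entries_def by simp

lemma last_entries_carrier: "v \<in> carrier_vec n \<Longrightarrow> last_entries k v \<in> carrier_vec (n - k)"
  unfolding last_entries_def by simp

lemma first_entries_append_last_entries:
  "v \<in> carrier_vec n \<Longrightarrow> k \<le> n \<Longrightarrow> first_entries k v @\<^sub>v last_entries k v = v"
  unfolding first_entries_def last_entries_def by (intro eq_vecI) auto

lemma append_vec_minus:
  "u \<in> carrier_vec n \<Longrightarrow> u' \<in> carrier_vec n \<Longrightarrow> v \<in> carrier_vec m \<Longrightarrow> v' \<in> carrier_vec m \<Longrightarrow>
    (u @\<^sub>v v) - (u' @\<^sub>v v') = (u - u') @\<^sub>v (v - v')"
  by (intro eq_vecI) auto

lemma mult_mat_vec_blocks: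
  fixes M :: "real mat"
  assumes M: "M \<in> carrier_mat r n" and v: "v \<in> carrier_vec n" and k: "k \<le> n"
  shows "M *\<^sub>v v = first_cols k M *\<^sub>v first_entries k v + last_cols k M *\<^sub>v last_entries k v"
proof (rule eq_vecI)
  fix i assume "i < dim_vec (first_cols k M *\<^sub>v first_entries k v + last_cols k M *\<^sub>v last_entries k v)"
  then have i: "i < r" using M unfolding last_cols_def by simp
  have "(M *\<^sub>v v) $ i = (\<Sum>j\<in>{0..<n}. M $$ (i, j) * v $ j)"
    using M v i by (simp add: scalar_prod_def)
  also have "\<dots> = (\<Sum>j\<in>{0..<k}. M $$ (i, j) * v $ j) + (\<Sum>j\<in>{k..<n}. M $$ (i, j) * v $ j)"
    using k by (metis le0 sum.atLeastLessThan_concat)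
  also have "(\<Sum>j\<in>{k..<n}. M $$ (i, j) * v $ j) = (\<Sum>j\<in>{0..<n-k}. M $$ (i, j + k) * v $ (j + k))"
    using sum.shift_bounds_nat_ivl[of "\<lambda>j. M $$ (i, j) * v $ j" 0 k "n - k"] k by simp
  finally show "(M *\<^sub>v v) $ i = (first_cols k M *\<^sub>v first_entries k v + last_cols k M *\<^sub>v last_entries k v) $ i"
    using M v i unfolding first_cols_def first_entries_def last_cols_def last_entries_def
    by (simp add: scalar_prod_def)
qed (use M in \<open>simp add: last_cols_def\<close>)

lemma mult_mat_vec_affine_diff:
  fixes N M :: "real mat"
  assumes N: "N \<in> carrier_mat k p" and M: "M \<in> carrier_mat p q"
    and d: "d \<in> carrier_vec p" and s: "s \<in> carrier_vec q" and t: "t \<in> carrier_vec q"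
  shows "N *\<^sub>v (d - M *\<^sub>v t) - N *\<^sub>v (d - M *\<^sub>v s) = (N * M) *\<^sub>v (s - t)"
proof -
  have "(d - M *\<^sub>v t) - (d - M *\<^sub>v s) = M *\<^sub>v (s - t)"
    using mult_minus_distrib_mat_vec[OF M s t] d M s t by (intro eq_vecI) auto
  then have "N *\<^sub>v (d - M *\<^sub>v t) - N *\<^sub>v (d - M *\<^sub>v s) = N *\<^sub>v (M *\<^sub>v (s - t))"
    using mult_minus_distrib_mat_vec[OF N, of "d - M *\<^sub>v t" "d - M *\<^sub>v s"] d M s t by simp
  then show ?thesis using N M s t by simp
qed

section \<open>Error of the HardNet-Aff projection\<close>

lemma A_tilde_carrier:
  fixes A C :: "real mat"
  assumes A: "A \<in> carrier_mat m n" and C: "C \<in> carrier_mat p n" and "invertible_mat (first_cols p C)"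
  shows "A_tilde p A C \<in> carrier_mat m (n - p)"
proof -
  have "mat_inv (first_cols p C) \<in> carrier_mat p p"
    using invertible_mat_mat_inv[OF first_cols_carrier[OF C] assms(3)] by blast
  then have "first_cols p A * mat_inv (first_cols p C) * last_cols p C \<in> carrier_mat m (n - p)"
    by (rule mult_carrier_mat[OF mult_carrier_mat[OF first_cols_carrier[OF A]] last_cols_carrier[OF C]])
  then show ?thesis unfolding A_tilde_def by (rule minus_carrier_mat)
qed

lemma eliminate_equality_constraints:
  fixes C :: "real mat"
  assumes C: "C \<in> carrier_mat p n" and "p \<le> n" and "invertible_mat (first_cols p C)"
    and f: "f \<in> carrier_vec n" and "C *\<^sub>v f = d"
  shows "first_entries p f = mat_inv (first_cols p C) *\<^sub>v (d - last_cols p C *\<^sub>v last_entries p f)"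
proof -
  define f1 f2 where "f1 = first_entries p f" and "f2 = last_entries p f"
  have dims: "f1 \<in> carrier_vec p" "f2 \<in> carrier_vec (n - p)"
    "first_cols p C \<in> carrier_mat p p" "last_cols p C \<in> carrier_mat p (n - p)"
    unfolding f1_def f2_def
    using first_entries_carrier last_entries_carrier[OF f] first_cols_carrier[OF C] last_cols_carrier[OF C]
    by auto
  have "first_cols p C *\<^sub>v f1 + last_cols p C *\<^sub>v f2 = d"
    using mult_mat_vec_blocks[OF C f assms(2)] assms(5) unfolding f1_def f2_def by simp
  then have "d - last_cols p C *\<^sub>v f2 = first_cols p C *\<^sub>v f1"
    using dims by (intro eq_vecI) auto
  moreover obtain Ci: "mat_inv (first_cols p C) \<in> carrier_mat p p"
    and inverse: "mat_inv (first_cols p C) * first_cols p C = 1\<^sub>m p"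
    using invertible_mat_mat_inv[OF dims(3) assms(3)] by blast
  then have "mat_inv (first_cols p C) *\<^sub>v (first_cols p C *\<^sub>v f1) = f1"
    using dims assoc_mult_mat_vec[OF Ci dims(3) dims(1)] by simp
  ultimately show ?thesis unfolding f1_def f2_def by simp
qed

text \<open>In terms of the free block \<open>z\<close>, the constraint \<open>A [C\<^sub>1\<^sup>-\<^sup>1 (d - C\<^sub>2 z); z] \<le> b\<close>
  is exactly \<open>\<tilde>A z \<le> \<tilde>b\<close>: both sides differ by \<open>A\<^sub>1 C\<^sub>1\<^sup>-\<^sup>1 d\<close>.\<close>

lemma reduced_inequality_constraints:
  fixes A C :: "real mat"
  assumes A: "A \<in> carrier_mat m n" and C: "C \<in> carrier_mat p n" and "p \<le> n"
    and "invertible_mat (first_cols p C)" and d: "d \<in> carrier_vec p"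
    and f: "f \<in> carrier_vec n" and "C *\<^sub>v f = d" and "vec_le (A *\<^sub>v f) b"
  shows "vec_le (A_tilde p A C *\<^sub>v last_entries p f) (b_tilde p A b C d)"
proof -
  define A1 A2 C2 Ci f1 f2 where "A1 = first_cols p A" and "A2 = last_cols p A"
    and "C2 = last_cols p C" and "Ci = mat_inv (first_cols p C)"
    and "f1 = first_entries p f" and "f2 = last_entries p f"
  have dims: "A1 \<in> carrier_mat m p" "A2 \<in> carrier_mat m (n - p)" "C2 \<in> carrier_mat p (n - p)"
    "Ci \<in> carrier_mat p p" "f2 \<in> carrier_vec (n - p)"
    unfolding A1_def A2_def C2_def Ci_def f2_def
    using first_cols_carrier[OF A] last_cols_carrier[OF A] last_cols_carrier[OF C] last_entries_carrier[OF f]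
      invertible_mat_mat_inv[OF first_cols_carrier[OF C] assms(4)] by auto
  have "A *\<^sub>v f = A1 *\<^sub>v f1 + A2 *\<^sub>v f2"
    unfolding A1_def A2_def f1_def f2_def by (rule mult_mat_vec_blocks[OF A f assms(3)])
  also have "f1 = Ci *\<^sub>v d - Ci *\<^sub>v (C2 *\<^sub>v f2)"
    using eliminate_equality_constraints[OF C assms(3,4) f assms(7)] mult_minus_distrib_mat_vec[OF dims(4) d] dims
    unfolding f1_def f2_def Ci_def C2_def by simp
  finally have "A *\<^sub>v f = A1 *\<^sub>v (Ci *\<^sub>v d) - A1 *\<^sub>v (Ci *\<^sub>v (C2 *\<^sub>v f2)) + A2 *\<^sub>v f2"
    using mult_minus_distrib_mat_vec[OF dims(1)] dims d by simp
  moreover have "A_tilde p A C *\<^sub>v f2 = A2 *\<^sub>v f2 - A1 *\<^sub>v (Ci *\<^sub>v (C2 *\<^sub>v f2))"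
  proof -
    have "(A1 * Ci * C2) *\<^sub>v f2 = A1 *\<^sub>v (Ci *\<^sub>v (C2 *\<^sub>v f2))"
      using assoc_mult_mat_vec[of "A1 * Ci" m p C2 "n - p" f2] dims by simp
    moreover have "A1 * Ci * C2 \<in> carrier_mat m (n - p)" using dims by simp
    ultimately show ?thesis
      unfolding A_tilde_def A1_def[symmetric] A2_def[symmetric] C2_def[symmetric] Ci_def[symmetric]
      using minus_mult_distrib_mat_vec[of A2 m "n - p" "A1 * Ci * C2" f2] dims by simp
  qed
  moreover have "b_tilde p A b C d = b - A1 *\<^sub>v (Ci *\<^sub>v d)"
    unfolding b_tilde_def A1_def Ci_def ..
  ultimately show ?thesis
    using assms(8) dims d unfolding vec_le_def f2_def[symmetric] by auto
qed

lemma vnorm_relu_diff_le: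
  assumes "vec_le u w" and "dim_vec v = dim_vec w"
  shows "vnorm (relu (v - w)) \<le> vnorm (v - u)"
proof -
  have "vnorm (relu (v - w)) = L2_set (\<lambda>i. max (v $ i - w $ i) 0) {0..<dim_vec w}"
    unfolding vnorm_L2 relu_def using assms(2) by (intro L2_set_cong) auto
  also have "\<dots> \<le> L2_set (\<lambda>i. \<bar>v $ i - u $ i\<bar>) {0..<dim_vec w}"
    using assms unfolding vec_le_def by (intro L2_set_mono) auto
  also have "\<dots> = vnorm (v - u)"
    using assms unfolding vnorm_L2 L2_set_def vec_le_def by simp
  finally show ?thesis .
qed

lemma vnorm_relu_correction_le:
  fixes M P :: "real mat"
  assumes M: "M \<in> carrier_mat m q" and P: "P \<in> carrier_mat q m"
    and y: "y \<in> carrier_vec q" and z: "z \<in> carrier_vec q" and "vec_le (M *\<^sub>v z) c"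
  shows "vnorm (z - (y - P *\<^sub>v relu (M *\<^sub>v y - c))) \<le> (1 + opnorm P * opnorm M) * vnorm (z - y)"
proof -
  define r where "r = relu (M *\<^sub>v y - c)"
  have c: "c \<in> carrier_vec m" using assms(5) M z unfolding vec_le_def by (auto intro: carrier_vecI)
  then have r: "r \<in> carrier_vec m" unfolding r_def relu_def using M y by simp
  have "vnorm r \<le> vnorm (M *\<^sub>v y - M *\<^sub>v z)"
    unfolding r_def by (rule vnorm_relu_diff_le[OF assms(5)]) (use M y c in simp)
  also have "\<dots> \<le> opnorm M * vnorm (z - y)"
    using vnorm_mult_mat_vec_le[OF M, of "y - z"] vnorm_minus_commute[of y z]
      mult_minus_distrib_mat_vec[OF M y z] y z by simp
  finally have r_bound: "vnorm r \<le> opnorm M * vnorm (z - y)" .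
  have "z - (y - P *\<^sub>v r) = (z - y) + P *\<^sub>v r"
    using y z P r by (intro eq_vecI) auto
  then have "vnorm (z - (y - P *\<^sub>v r)) \<le> vnorm (z - y) + opnorm P * vnorm r"
    using vnorm_add_le[of "z - y" "P *\<^sub>v r"] vnorm_mult_mat_vec_le[OF P r] P y z by simp
  also have "\<dots> \<le> vnorm (z - y) + opnorm P * (opnorm M * vnorm (z - y))"
    using r_bound opnorm_nonneg[OF P] by (simp add: mult_left_mono)
  finally show ?thesis unfolding r_def by (simp add: algebra_simps)
qed

lemma vnorm_append_le:
  assumes "vnorm u \<le> k * vnorm v" and "0 \<le> k"
  shows "vnorm (u @\<^sub>v v) \<le> sqrt (1 + k\<^sup>2) * vnorm v"
proof (rule power2_le_imp_le)
  have "(vnorm (u @\<^sub>v v))\<^sup>2 \<le> (k * vnorm v)\<^sup>2 + (vnorm v)\<^sup>2"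
    unfolding vnorm_append_power2 using assms vnorm_nonneg by (simp add: power_mono)
  then show "(vnorm (u @\<^sub>v v))\<^sup>2 \<le> (sqrt (1 + k\<^sup>2) * vnorm v)\<^sup>2"
    by (simp add: algebra_simps)
qed (simp add: vnorm_nonneg)

lemma hardnet_aff_error_bound:
  fixes A C :: "real mat"
  assumes A: "A \<in> carrier_mat m n" and C: "C \<in> carrier_mat p n" and d: "d \<in> carrier_vec p"
    and le: "p \<le> n" and C1_inv: "invertible_mat (first_cols p C)"
    and rank: "full_row_rank (A_tilde p A C)"
    and f: "f \<in> carrier_vec n" and f_ineq: "vec_le (A *\<^sub>v f) b" and f_eq: "C *\<^sub>v f = d"
    and y: "y \<in> carrier_vec (n - p)"
  shows "vnorm (f - hardnet_aff p A b C d y)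
    \<le> (1 + opnorm (pinv (A_tilde p A C)) * opnorm (A_tilde p A C))
       * sqrt (1 + (opnorm (mat_inv (first_cols p C) * last_cols p C))\<^sup>2)
       * vnorm (last_entries p f - y)"
proof -
  define At Ci C2 K f2 fs where "At = A_tilde p A C" and "Ci = mat_inv (first_cols p C)"
    and "C2 = last_cols p C" and "K = Ci * C2" and "f2 = last_entries p f"
    and "fs = hardnet_fstar p A b C d y"
  obtain Ci: "Ci \<in> carrier_mat p p"
    using invertible_mat_mat_inv[OF first_cols_carrier[OF C] C1_inv] unfolding Ci_def by blast
  have C2: "C2 \<in> carrier_mat p (n - p)" unfolding C2_def by (rule last_cols_carrier[OF C])
  have K: "K \<in> carrier_mat p (n - p)" unfolding K_def by (rule mult_carrier_mat[OF Ci C2])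
  have At: "At \<in> carrier_mat m (n - p)" unfolding At_def by (rule A_tilde_carrier[OF A C C1_inv])
  have f2: "f2 \<in> carrier_vec (n - p)" unfolding f2_def by (rule last_entries_carrier[OF f])
  have P: "pinv At \<in> carrier_mat (n - p) m" by (rule pinv_carrier[OF At rank[folded At_def]])
  have fs: "fs \<in> carrier_vec (n - p)"
    using P unfolding fs_def hardnet_fstar_def At_def[symmetric] carrier_vec_def by simp
  have fs_error: "vnorm (f2 - fs) \<le> (1 + opnorm (pinv At) * opnorm At) * vnorm (f2 - y)"
    unfolding fs_def hardnet_fstar_def At_def[symmetric]
    by (rule vnorm_relu_correction_le[OF At P y f2])
      (use reduced_inequality_constraints[OF A C le C1_inv d f f_eq f_ineq] in
        \<open>simp add: At_def f2_def\<close>)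
  have "f = Ci *\<^sub>v (d - C2 *\<^sub>v f2) @\<^sub>v f2"
    using first_entries_append_last_entries[OF f le]
    unfolding eliminate_equality_constraints[OF C le C1_inv f f_eq] Ci_def C2_def f2_def by simp
  moreover have "hardnet_aff p A b C d y = Ci *\<^sub>v (d - C2 *\<^sub>v fs) @\<^sub>v fs"
    unfolding hardnet_aff_def Let_def fs_def Ci_def C2_def ..
  ultimately have "f - hardnet_aff p A b C d y
      = (Ci *\<^sub>v (d - C2 *\<^sub>v f2) - Ci *\<^sub>v (d - C2 *\<^sub>v fs)) @\<^sub>v (f2 - fs)"
    using append_vec_minus[of _ p _ f2 "n - p" fs] Ci C2 d f2 fs by simp
  also have "\<dots> = (K *\<^sub>v (fs - f2)) @\<^sub>v (f2 - fs)"
    unfolding K_def mult_mat_vec_affine_diff[OF Ci C2 d fs f2] ..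
  finally have "vnorm (f - hardnet_aff p A b C d y) \<le> sqrt (1 + (opnorm K)\<^sup>2) * vnorm (f2 - fs)"
    using vnorm_append_le[OF _ opnorm_nonneg[OF K]] vnorm_mult_mat_vec_le[OF K, of "fs - f2"]
      vnorm_minus_commute[of fs f2] f2 fs by simp
  also have "\<dots> \<le> sqrt (1 + (opnorm K)\<^sup>2) * ((1 + opnorm (pinv At) * opnorm At) * vnorm (f2 - y))"
    using fs_error by (simp add: mult_left_mono)
  finally show ?thesis unfolding At_def K_def Ci_def C2_def f2_def by (simp add: ac_simps)
qed

theorem mainTheorem2:
  fixes X :: "real vec set"
    and n_in n_ineq n_eq n_out :: nat
    and A C :: "real vec \<Rightarrow> real mat"
    and b d :: "real vec \<Rightarrow> real vec"
    and f f_theta :: "real vec \<Rightarrow> real vec"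
  assumes X_dim: "X \<subseteq> carrier_vec n_in"
    and neq_le: "n_eq \<le> n_out"
    and A_dim: "\<And>x. x \<in> X \<Longrightarrow> A x \<in> carrier_mat n_ineq n_out"
    and b_dim: "\<And>x. x \<in> X \<Longrightarrow> b x \<in> carrier_vec n_ineq"
    and C_dim: "\<And>x. x \<in> X \<Longrightarrow> C x \<in> carrier_mat n_eq n_out"
    and d_dim: "\<And>x. x \<in> X \<Longrightarrow> d x \<in> carrier_vec n_eq"
    and A_i: "\<And>x. x \<in> X \<Longrightarrow> \<exists>y \<in> carrier_vec n_out.
                 vec_le (A x *\<^sub>v y) (b x) \<and> C x *\<^sub>v y = d x"
    and A_ii: "\<And>x. x \<in> X \<Longrightarrow> invertible_mat (first_cols n_eq (C x))"
    and A_iii: "\<And>x. x \<in> X \<Longrightarrow> full_row_rank (A_tilde n_eq (A x) (C x))"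
    and f_dim: "\<And>x. x \<in> X \<Longrightarrow> f x \<in> carrier_vec n_out"
    and f_ineq: "\<And>x. x \<in> X \<Longrightarrow> vec_le (A x *\<^sub>v f x) (b x)"
    and f_eq: "\<And>x. x \<in> X \<Longrightarrow> C x *\<^sub>v f x = d x"
    and ftheta_dim: "\<And>x. x \<in> X \<Longrightarrow> f_theta x \<in> carrier_vec (n_out - n_eq)"
    and x_in: "x \<in> X"
  shows "vnorm (f x - hardnet_aff n_eq (A x) (b x) (C x) (d x) (f_theta x))
    \<le> (1 + opnorm (pinv (A_tilde n_eq (A x) (C x))) * opnorm (A_tilde n_eq (A x) (C x)))
       * sqrt (1 + (opnorm (mat_inv (first_cols n_eq (C x)) * last_cols n_eq (C x)))\<^sup>2)
       * vnorm (last_entries n_eq (f x) - f_theta x)"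
  by (rule hardnet_aff_error_bound[OF A_dim[OF x_in] C_dim[OF x_in] d_dim[OF x_in] neq_le
        A_ii[OF x_in] A_iii[OF x_in] f_dim[OF x_in] f_ineq[OF x_in] f_eq[OF x_in] ftheta_dim[OF x_in]])

end
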